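(* Let $A$ be a non-empty set and let $f\in H_0[\ell_1(A)]_+$ be maximal. Then there exists $\phi\in\ell_\infty(A)^*$ such that $f=g_\phi$, where $g_\phi(x^* )=|\phi(|x^*|)|$ for $x^*\in\ell_\infty(A)$.
   Context: Identify $\ell_1(A)^*$ with $\ell_\infty(A)$. $H[\ell_1(A)]$ is the vector space of positively homogeneous functions $f:\ell_\infty(A)\to\mathbb R$ ($f(\lambda x^* )=\lambda f(x^* )$ for $\lambda>0$), ordered pointwise. For $f\in H[\ell_1(A)]$, $\|f\|_{FBL[\ell_1(A)]}:=\sup\{\sum_{k=1}^n|f(x_k^* )| : n\in\mathbb N,\ x_1^*,\dots,x_n^*\in\ell_\infty(A),\ \sup_{a\in A}\sum_{k=1}^n|x_k^*(a)|\le1\}$, and $H_0[\ell_1(A)]=\{f:\|f\|_{FBL[\ell_1(A)]}<\infty\}$ with positive cone $H_0[\ell_1(A)]_+$. An element $f\in H_0[\ell_1(A)]_+$ is maximal if the only $g\in H_0[\ell_1(A)]_+$ with $g\ge f$ and $\|g\|_{FBL[\ell_1(A)]}=\|f\|_{FBL[\ell_1(A)]}$ is $g=f$. *)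

theory Defs
  imports "HOL-Analysis.Analysis"
begin

text \<open>ell_infinity(A): bounded real functions on A, represented as functions
  on the ambient type that vanish outside A.\<close>
definition linf :: "'a set \<Rightarrow> ('a \<Rightarrow> real) set" where
  "linf A = {x. (\<forall>a. a \<notin> A \<longrightarrow> x a = 0) \<and> bounded (x ` A)}"

definition supnorm :: "'a set \<Rightarrow> ('a \<Rightarrow> real) \<Rightarrow> real" where
  "supnorm A x = (SUP a\<in>A. \<bar>x a\<bar>)"

definition absf :: "('a \<Rightarrow> real) \<Rightarrow> ('a \<Rightarrow> real)" where
  "absf x = (\<lambda>a. \<bar>x a\<bar>)"

definition linf_dual :: "'a set \<Rightarrow> (('a \<Rightarrow> real) \<Rightarrow> real) set" where
  "linf_dual A = {\<phi>.
     (\<forall>x\<in>linf A. \<forall>y\<in>linf A. \<phi> (\<lambda>a. x a + y a) = \<phi> x + \<phi> y) \<and>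
     (\<forall>x\<in>linf A. \<forall>c. \<phi> (\<lambda>a. c * x a) = c * \<phi> x) \<and>
     (\<exists>C. \<forall>x\<in>linf A. \<bar>\<phi> x\<bar> \<le> C * supnorm A x)}"

definition g_of :: "(('a \<Rightarrow> real) \<Rightarrow> real) \<Rightarrow> ('a \<Rightarrow> real) \<Rightarrow> real" where
  "g_of \<phi> x = \<bar>\<phi> (absf x)\<bar>"

text \<open>H[ell_1(A)]: positively homogeneous functions on ell_infinity(A)
  (only values on ell_infinity(A) are relevant).\<close>
definition pos_hom :: "'a set \<Rightarrow> (('a \<Rightarrow> real) \<Rightarrow> real) \<Rightarrow> bool" where
  "pos_hom A f \<longleftrightarrow> (\<forall>x\<in>linf A. \<forall>t>0. f (\<lambda>a. t * x a) = t * f x)"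

definition fbl_sums :: "'a set \<Rightarrow> (('a \<Rightarrow> real) \<Rightarrow> real) \<Rightarrow> real set" where
  "fbl_sums A f = {(\<Sum>k<n. \<bar>f (xs k)\<bar>) | (n::nat) xs.
      (\<forall>k<n. xs k \<in> linf A) \<and> (\<forall>a\<in>A. (\<Sum>k<n. \<bar>xs k a\<bar>) \<le> 1)}"

definition fbl_norm :: "'a set \<Rightarrow> (('a \<Rightarrow> real) \<Rightarrow> real) \<Rightarrow> real" where
  "fbl_norm A f = Sup (fbl_sums A f)"

definition H0 :: "'a set \<Rightarrow> (('a \<Rightarrow> real) \<Rightarrow> real) set" where
  "H0 A = {f. pos_hom A f \<and> bdd_above (fbl_sums A f)}"

definition H0_pos :: "'a set \<Rightarrow> (('a \<Rightarrow> real) \<Rightarrow> real) set" where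
  "H0_pos A = {f \<in> H0 A. \<forall>x\<in>linf A. 0 \<le> f x}"

definition maximal :: "'a set \<Rightarrow> (('a \<Rightarrow> real) \<Rightarrow> real) \<Rightarrow> bool" where
  "maximal A f \<longleftrightarrow> f \<in> H0_pos A \<and>
     (\<forall>g\<in>H0_pos A. (\<forall>x\<in>linf A. f x \<le> g x) \<and> fbl_norm A g = fbl_norm A f
        \<longrightarrow> (\<forall>x\<in>linf A. g x = f x))"

end

theory Submission
  imports Defs
begin

text \<open>Put q(x) = inf {\<parallel>f\<parallel> t - \<Sum>i f(y_i) : x + \<Sum>i |y_i| \<le> t on A}. The defining bound
  \<Sum>i f(y_i) \<le> \<parallel>f\<parallel> sup \<Sum>i |y_i| of the FBL norm makes q finite, and q is sublinear.
  By Hahn-Banach (via Zorn: a minimal sublinear functional below q is linear) there is a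
  linear \<phi> \<le> q. The witness (t, []) gives \<phi>(x) \<le> \<parallel>f\<parallel> sup x, so \<phi> is bounded and positive,
  and the witness (0, [y]) for x = -|y| gives f(y) \<le> \<phi>(|y|). Hence g_\<phi> \<ge> f with
  \<parallel>g_\<phi>\<parallel> \<le> \<parallel>f\<parallel>, and maximality of f forces g_\<phi> = f.\<close>

definition sublinear_on :: "('a \<Rightarrow> real) set \<Rightarrow> (('a \<Rightarrow> real) \<Rightarrow> real) \<Rightarrow> bool" where
  "sublinear_on V p \<longleftrightarrow>
     (\<forall>x\<in>V. \<forall>y\<in>V. p (\<lambda>a. x a + y a) \<le> p x + p y) \<and> (\<forall>x\<in>V. \<forall>c>0. p (\<lambda>a. c * x a) = c * p x)"

definition linear_on :: "('a \<Rightarrow> real) set \<Rightarrow> (('a \<Rightarrow> real) \<Rightarrow> real) \<Rightarrow> bool" where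
  "linear_on V \<phi> \<longleftrightarrow>
     (\<forall>x\<in>V. \<forall>y\<in>V. \<phi> (\<lambda>a. x a + y a) = \<phi> x + \<phi> y) \<and> (\<forall>x\<in>V. \<forall>c. \<phi> (\<lambda>a. c * x a) = c * \<phi> x)"

lemma le_INF_add_INF:
  fixes u :: real
  assumes "I \<noteq> {}" "J \<noteq> {}" "\<And>i j. i \<in> I \<Longrightarrow> j \<in> J \<Longrightarrow> u \<le> f i + g j"
  shows "u \<le> (INF i\<in>I. f i) + (INF j\<in>J. g j)"
proof -
  have "u - g j \<le> (INF i\<in>I. f i)" if "j \<in> J" for j
    using assms that by (intro cINF_greatest) (auto simp: algebra_simps)
  then have "u - (INF i\<in>I. f i) \<le> (INF j\<in>J. g j)"
    using assms(2) by (intro cINF_greatest) (auto simp: algebra_simps)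
  then show ?thesis by simp
qed

lemma le_mult_INF:
  fixes u c :: real
  assumes "c > 0" "I \<noteq> {}" "\<And>i. i \<in> I \<Longrightarrow> u \<le> c * f i"
  shows "u \<le> c * (INF i\<in>I. f i)"
proof -
  have "u / c \<le> (INF i\<in>I. f i)"
    using assms by (intro cINF_greatest) (auto simp: field_simps)
  then show ?thesis using assms(1) by (simp add: field_simps)
qed

locale func_subspace =
  fixes V :: "('a \<Rightarrow> real) set"
  assumes zero_mem: "(\<lambda>a. 0) \<in> V"
    and add_mem: "x \<in> V \<Longrightarrow> y \<in> V \<Longrightarrow> (\<lambda>a. x a + y a) \<in> V"
    and scale_mem: "x \<in> V \<Longrightarrow> (\<lambda>a. c * x a) \<in> V"
begin

lemma neg_mem: "x \<in> V \<Longrightarrow> (\<lambda>a. - x a) \<in> V"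
  using scale_mem[of x "-1"] by simp

lemma sum_mem: "(\<And>k. k < (n::nat) \<Longrightarrow> z k \<in> V) \<Longrightarrow> (\<lambda>a. \<Sum>k<n. z k a) \<in> V"
  by (induction n) (simp_all add: zero_mem add_mem)

lemma sublinear_on_add: "sublinear_on V p \<Longrightarrow> x \<in> V \<Longrightarrow> y \<in> V \<Longrightarrow> p (\<lambda>a. x a + y a) \<le> p x + p y"
  unfolding sublinear_on_def by blast

lemma sublinear_on_scale: "sublinear_on V p \<Longrightarrow> x \<in> V \<Longrightarrow> c > 0 \<Longrightarrow> p (\<lambda>a. c * x a) = c * p x"
  unfolding sublinear_on_def by blast

lemma sublinear_on_cong:
  assumes "\<And>x. x \<in> V \<Longrightarrow> p x = p' x"
  shows "sublinear_on V p \<longleftrightarrow> sublinear_on V p'"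
  using assms add_mem scale_mem unfolding sublinear_on_def by simp

lemma pos_homogeneous_if_le:
  assumes le: "\<And>x c. x \<in> V \<Longrightarrow> c > 0 \<Longrightarrow> h (\<lambda>a. c * x a) \<le> c * h x"
    and x: "x \<in> V" and c: "c > 0"
  shows "h (\<lambda>a. c * x a) = c * h x"
proof -
  have "h x \<le> (1 / c) * h (\<lambda>a. c * x a)"
    using le[OF scale_mem[OF x, of c], of "1 / c"] c by simp
  with c have "c * h x \<le> h (\<lambda>a. c * x a)" by (simp add: field_simps)
  with le[OF x c] show ?thesis by linarith
qed

lemma sublinear_on_zero: "sublinear_on V p \<Longrightarrow> p (\<lambda>a. 0) = 0"
  using sublinear_on_scale[OF _ zero_mem, of p 2] by simp

lemma sublinear_on_nonneg_scale:
  "sublinear_on V p \<Longrightarrow> x \<in> V \<Longrightarrow> t \<ge> 0 \<Longrightarrow> p (\<lambda>a. t * x a) = t * p x"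
  by (cases "t = 0") (simp_all add: sublinear_on_zero sublinear_on_scale)

lemma sublinear_on_neg_le: "sublinear_on V p \<Longrightarrow> x \<in> V \<Longrightarrow> - p (\<lambda>a. - x a) \<le> p x"
  using sublinear_on_add[OF _ _ neg_mem, of p x x] sublinear_on_zero[of p] by simp

lemma sublinear_on_INF_chain:
  assumes ne: "C \<noteq> {}" and sub: "\<And>p. p \<in> C \<Longrightarrow> sublinear_on V p"
    and chain: "\<And>p p'. p \<in> C \<Longrightarrow> p' \<in> C \<Longrightarrow> (\<forall>x\<in>V. p x \<le> p' x) \<or> (\<forall>x\<in>V. p' x \<le> p x)"
    and bdd: "\<And>x. x \<in> V \<Longrightarrow> bdd_below ((\<lambda>p. p x) ` C)"
  shows "sublinear_on V (\<lambda>x. INF p\<in>C. p x)"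
  unfolding sublinear_on_def
proof (intro conjI ballI allI impI)
  fix x y assume x: "x \<in> V" and y: "y \<in> V"
  have "(INF p\<in>C. p (\<lambda>a. x a + y a)) \<le> p1 x + p2 y" if "p1 \<in> C" "p2 \<in> C" for p1 p2
  proof -
    have "\<exists>p\<in>C. (\<forall>x\<in>V. p x \<le> p1 x) \<and> (\<forall>x\<in>V. p x \<le> p2 x)"
      using chain[OF that] that by auto
    then obtain p where p: "p \<in> C" "\<forall>x\<in>V. p x \<le> p1 x" "\<forall>x\<in>V. p x \<le> p2 x"
      by blast
    have "(INF p\<in>C. p (\<lambda>a. x a + y a)) \<le> p (\<lambda>a. x a + y a)"
      using bdd add_mem x y p(1) by (intro cINF_lower) auto
    also have "\<dots> \<le> p x + p y" using sublinear_on_add[OF sub[OF p(1)] x y] .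
    also have "\<dots> \<le> p1 x + p2 y" using p x y by (simp add: add_mono)
    finally show ?thesis .
  qed
  then show "(INF p\<in>C. p (\<lambda>a. x a + y a)) \<le> (INF p\<in>C. p x) + (INF p\<in>C. p y)"
    using ne by (intro le_INF_add_INF) auto
next
  have le: "(INF p\<in>C. p (\<lambda>a. c * x a)) \<le> c * (INF p\<in>C. p x)" if x: "x \<in> V" and c: "c > 0" for x c
  proof -
    have "(INF p\<in>C. p (\<lambda>a. c * x a)) \<le> c * p x" if "p \<in> C" for p
      using cINF_lower[OF bdd[OF scale_mem[OF x, of c]] that] sublinear_on_scale[OF sub[OF that] x c]
      by simp
    then show ?thesis using c ne by (intro le_mult_INF) auto
  qed
  show "(INF p\<in>C. p (\<lambda>a. c * x a)) = c * (INF p\<in>C. p x)" if "x \<in> V" "c > 0" for x c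
    by (rule pos_homogeneous_if_le[where h = "\<lambda>x. INF p\<in>C. p x", OF le that])
qed

lemma sublinear_on_directional_INF:
  assumes m: "sublinear_on V m" and y: "y \<in> V"
  shows "sublinear_on V (\<lambda>x. INF t\<in>{0..}. m (\<lambda>a. x a + t * y a) - t * m y)"
    and "x \<in> V \<Longrightarrow> t \<ge> 0 \<Longrightarrow>
      (INF t\<in>{0..}. m (\<lambda>a. x a + t * y a) - t * m y) \<le> m (\<lambda>a. x a + t * y a) - t * m y"
proof -
  let ?d = "\<lambda>x t. m (\<lambda>a. x a + t * y a) - t * m y"
  have shift_mem: "(\<lambda>a. x a + t * y a) \<in> V" if "x \<in> V" for x t
    using add_mem scale_mem that y by blast
  have "- m (\<lambda>a. - x a) \<le> ?d x t" if x: "x \<in> V" and t: "t \<ge> 0" for x t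
  proof -
    have "m (\<lambda>a. t * y a) \<le> m (\<lambda>a. x a + t * y a) + m (\<lambda>a. - x a)"
      using sublinear_on_add[OF m shift_mem[OF x] neg_mem[OF x]] by simp
    then show ?thesis using sublinear_on_nonneg_scale[OF m y t] by linarith
  qed
  then have bdd: "bdd_below (?d x ` {0..})" if "x \<in> V" for x
    using that by (intro bdd_belowI2[of _ "- m (\<lambda>a. - x a)"]) auto
  then show lower: "(INF t\<in>{0..}. ?d x t) \<le> ?d x t" if "x \<in> V" "t \<ge> 0" for x t
    using that by (intro cINF_lower) auto
  show "sublinear_on V (\<lambda>x. INF t\<in>{0..}. ?d x t)"
    unfolding sublinear_on_def
  proof (intro conjI ballI allI impI)
    fix x1 x2 assume x1: "x1 \<in> V" and x2: "x2 \<in> V"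
    have "(INF t\<in>{0..}. ?d (\<lambda>a. x1 a + x2 a) t) \<le> ?d x1 t1 + ?d x2 t2"
      if "t1 \<ge> 0" "t2 \<ge> 0" for t1 t2
    proof -
      have "m (\<lambda>a. (x1 a + x2 a) + (t1 + t2) * y a)
          \<le> m (\<lambda>a. x1 a + t1 * y a) + m (\<lambda>a. x2 a + t2 * y a)"
        using sublinear_on_add[OF m shift_mem[OF x1] shift_mem[OF x2]]
        by (simp add: algebra_simps)
      then show ?thesis
        using lower[OF add_mem[OF x1 x2], of "t1 + t2"] that by (simp add: algebra_simps)
    qed
    then show "(INF t\<in>{0..}. ?d (\<lambda>a. x1 a + x2 a) t)
        \<le> (INF t\<in>{0..}. ?d x1 t) + (INF t\<in>{0..}. ?d x2 t)"
      by (intro le_INF_add_INF) auto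
  next
    have le: "(INF t\<in>{0..}. ?d (\<lambda>a. c * x a) t) \<le> c * (INF t\<in>{0..}. ?d x t)"
      if x: "x \<in> V" and c: "c > 0" for x c
    proof (rule le_mult_INF[OF c])
      fix t :: real assume t: "t \<in> {0..}"
      have "m (\<lambda>a. c * x a + (c * t) * y a) = c * m (\<lambda>a. x a + t * y a)"
        using sublinear_on_scale[OF m shift_mem[OF x, of t] c] by (simp add: algebra_simps)
      then show "(INF t\<in>{0..}. ?d (\<lambda>a. c * x a) t) \<le> c * ?d x t"
        using lower[OF scale_mem[OF x, of c], of "c * t"] t c by (simp add: algebra_simps)
    qed simp
    show "(INF t\<in>{0..}. ?d (\<lambda>a. c * x a) t) = c * (INF t\<in>{0..}. ?d x t)"
      if "x \<in> V" "c > 0" for x c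
      by (rule pos_homogeneous_if_le[where h = "\<lambda>x. INF t\<in>{0..}. ?d x t", OF le that])
  qed
qed

lemma minimal_sublinear_linear:
  assumes m: "sublinear_on V m"
    and minimal: "\<And>p x. sublinear_on V p \<Longrightarrow> (\<And>x. x \<in> V \<Longrightarrow> p x \<le> m x) \<Longrightarrow> x \<in> V \<Longrightarrow> p x = m x"
  shows "linear_on V m"
proof -
  have odd: "m (\<lambda>a. - y a) = - m y" if y: "y \<in> V" for y
  proof -
    note directional = sublinear_on_directional_INF[OF m y]
    let ?my = "\<lambda>x. INF t\<in>{0..}. m (\<lambda>a. x a + t * y a) - t * m y"
    have "m (\<lambda>a. - y a) = ?my (\<lambda>a. - y a)"
      using minimal[OF directional(1) _ neg_mem[OF y]] directional(2)[of _ 0] by simp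
    also have "\<dots> \<le> m (\<lambda>a. - y a + 1 * y a) - 1 * m y"
      using directional(2)[OF neg_mem[OF y], of 1] by simp
    also have "\<dots> = - m y" using sublinear_on_zero[OF m] by simp
    finally show ?thesis using sublinear_on_neg_le[OF m y] by linarith
  qed
  show ?thesis
    unfolding linear_on_def
  proof (intro conjI ballI allI)
    fix x y assume x: "x \<in> V" and y: "y \<in> V"
    have "m x \<le> m (\<lambda>a. x a + y a) + m (\<lambda>a. - y a)"
      using sublinear_on_add[OF m add_mem[OF x y] neg_mem[OF y]] by simp
    then show "m (\<lambda>a. x a + y a) = m x + m y"
      using sublinear_on_add[OF m x y] odd[OF y] by linarith
  next
    fix x and c :: real assume x: "x \<in> V"
    show "m (\<lambda>a. c * x a) = c * m x"
    proof (cases "c \<ge> 0")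
      case True
      then show ?thesis using sublinear_on_nonneg_scale[OF m x] by blast
    next
      case False
      have "m (\<lambda>a. c * x a) = m (\<lambda>a. (- c) * - x a)" by simp
      also have "\<dots> = (- c) * m (\<lambda>a. - x a)"
        using False by (intro sublinear_on_nonneg_scale[OF m neg_mem[OF x]]) simp
      also have "\<dots> = c * m x" using odd[OF x] by simp
      finally show ?thesis .
    qed
  qed
qed

lemma exists_minimal_sublinear_below:
  assumes q: "sublinear_on V q"
  obtains m where "sublinear_on V m" "\<And>x. x \<in> V \<Longrightarrow> m x \<le> q x"
    "\<And>p x. sublinear_on V p \<Longrightarrow> (\<And>x. x \<in> V \<Longrightarrow> p x \<le> m x) \<Longrightarrow> x \<in> V \<Longrightarrow> p x = m x"
proof -
  \<comment> \<open>normalising functionals to vanish outside V makes the pointwise order antisymmetric\<close>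
  define S where "S = {p. sublinear_on V p \<and> (\<forall>x\<in>V. p x \<le> q x) \<and> (\<forall>x. x \<notin> V \<longrightarrow> p x = 0)}"
  define below where "below p p' \<longleftrightarrow> (\<forall>x\<in>V. p' x \<le> p x)" for p p' :: "('a \<Rightarrow> real) \<Rightarrow> real"
  define restrict where "restrict p x = (if x \<in> V then p x else 0)" for p :: "('a \<Rightarrow> real) \<Rightarrow> real" and x
  have restrict_mem: "restrict p \<in> S" if "sublinear_on V p" "\<And>x. x \<in> V \<Longrightarrow> p x \<le> q x" for p
    using that sublinear_on_cong[of p "restrict p"] unfolding S_def restrict_def by auto
  have po: "partial_order_on S (relation_of below S)"
  proof (rule partial_order_on_relation_ofI)
    show "p = p'" if "p \<in> S" "p' \<in> S" "below p p'" "below p' p" for p p'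
    proof
      fix x show "p x = p' x"
        using that unfolding S_def below_def by (cases "x \<in> V") (auto intro: antisym)
    qed
    show "below p p" for p unfolding below_def by simp
    show "below p p''" if "below p p'" "below p' p''" for p p' p''
      using that unfolding below_def by (meson order_trans)
  qed
  have "\<exists>u\<in>S. \<forall>p\<in>C. below p u" if C: "C \<in> Chains (relation_of below S)" for C
  proof (cases "C = {}")
    case True
    then show ?thesis using restrict_mem[OF q] by blast
  next
    case False
    then obtain p0 where p0: "p0 \<in> C" by blast
    have CS: "C \<subseteq> S" using Chains_relation_of[OF C] .
    have bdd: "bdd_below ((\<lambda>p. p x) ` C)" if x: "x \<in> V" for x
    proof (rule bdd_belowI2)
      fix p assume "p \<in> C"
      then have "sublinear_on V p" "p (\<lambda>a. - x a) \<le> q (\<lambda>a. - x a)"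
        using CS neg_mem[OF x] unfolding S_def by auto
      then show "- q (\<lambda>a. - x a) \<le> p x" using sublinear_on_neg_le[of p x] x by linarith
    qed
    have "sublinear_on V (\<lambda>x. INF p\<in>C. p x)"
    proof (rule sublinear_on_INF_chain[OF False _ _ bdd])
      show "sublinear_on V p" if "p \<in> C" for p using that CS unfolding S_def by blast
      show "(\<forall>x\<in>V. p x \<le> p' x) \<or> (\<forall>x\<in>V. p' x \<le> p x)" if "p \<in> C" "p' \<in> C" for p p'
        using C that unfolding Chains_def relation_of_def below_def by blast
    qed
    moreover have "(INF p\<in>C. p x) \<le> q x" if "x \<in> V" for x
    proof -
      have "p0 x \<le> q x" using p0 CS that unfolding S_def by blast
      then show ?thesis using cINF_lower[OF bdd[OF that] p0] by linarith
    qed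
    ultimately have "restrict (\<lambda>x. INF p\<in>C. p x) \<in> S" by (rule restrict_mem)
    moreover have "below p (restrict (\<lambda>x. INF p\<in>C. p x))" if "p \<in> C" for p
      using cINF_lower[OF bdd that] unfolding below_def restrict_def by simp
    ultimately show ?thesis by blast
  qed
  then obtain m where mS: "m \<in> S" and max: "\<And>p. p \<in> S \<Longrightarrow> below m p \<Longrightarrow> p = m"
    using predicate_Zorn[OF po] by blast
  show thesis
  proof
    show "sublinear_on V m" "\<And>x. x \<in> V \<Longrightarrow> m x \<le> q x" using mS unfolding S_def by auto
    fix p x assume p: "sublinear_on V p" and le: "\<And>x. x \<in> V \<Longrightarrow> p x \<le> m x" and x: "x \<in> V"
    have mq: "\<forall>x\<in>V. m x \<le> q x" using mS unfolding S_def by blast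
    have "p x \<le> q x" if "x \<in> V" for x
      using order_trans[OF le[OF that]] mq that by blast
    then have "restrict p \<in> S" by (rule restrict_mem[OF p])
    moreover have "below m (restrict p)" using le unfolding below_def restrict_def by simp
    ultimately have "restrict p = m" by (rule max)
    then have "restrict p x = m x" by simp
    with x show "p x = m x" unfolding restrict_def by simp
  qed
qed

theorem linear_below_sublinear:
  assumes "sublinear_on V q"
  obtains \<phi> where "linear_on V \<phi>" "\<And>x. x \<in> V \<Longrightarrow> \<phi> x \<le> q x"
proof (rule exists_minimal_sublinear_below[OF assms])
  fix m assume m: "sublinear_on V m" "\<And>x. x \<in> V \<Longrightarrow> m x \<le> q x"
    and minimal: "\<And>p x. sublinear_on V p \<Longrightarrow> (\<And>x. x \<in> V \<Longrightarrow> p x \<le> m x) \<Longrightarrow> x \<in> V \<Longrightarrow> p x = m x"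
  have "linear_on V m" by (rule minimal_sublinear_linear[OF m(1)]) (fact minimal)
  then show thesis using m(2) by (rule that)
qed

lemma linear_on_add: "linear_on V \<phi> \<Longrightarrow> x \<in> V \<Longrightarrow> y \<in> V \<Longrightarrow> \<phi> (\<lambda>a. x a + y a) = \<phi> x + \<phi> y"
  unfolding linear_on_def by blast

lemma linear_on_scale: "linear_on V \<phi> \<Longrightarrow> x \<in> V \<Longrightarrow> \<phi> (\<lambda>a. c * x a) = c * \<phi> x"
  unfolding linear_on_def by blast

lemma linear_on_neg: "linear_on V \<phi> \<Longrightarrow> x \<in> V \<Longrightarrow> \<phi> (\<lambda>a. - x a) = - \<phi> x"
  using linear_on_scale[of \<phi> x "-1"] by simp

lemma linear_on_sum:
  assumes \<phi>: "linear_on V \<phi>" and z: "\<And>k. k < (n::nat) \<Longrightarrow> z k \<in> V"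
  shows "\<phi> (\<lambda>a. \<Sum>k<n. z k a) = (\<Sum>k<n. \<phi> (z k))"
  using z
proof (induction n)
  case 0
  show ?case using linear_on_scale[OF \<phi> zero_mem, of 0] by simp
next
  case (Suc n)
  then show ?case using linear_on_add[OF \<phi> sum_mem[of n z]] by simp
qed

end

lemma linf_iff: "x \<in> linf A \<longleftrightarrow> (\<forall>a. a \<notin> A \<longrightarrow> x a = 0) \<and> (\<exists>M. \<forall>a\<in>A. \<bar>x a\<bar> \<le> M)"
  unfolding linf_def bounded_iff by auto

interpretation linf: func_subspace "linf A" for A
proof
  show "(\<lambda>a. 0) \<in> linf A" unfolding linf_iff by auto
next
  fix x y assume "x \<in> linf A" "y \<in> linf A"
  then obtain M1 M2 where "\<forall>a\<in>A. \<bar>x a\<bar> \<le> M1" "\<forall>a\<in>A. \<bar>y a\<bar> \<le> M2"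
    and "\<forall>a. a \<notin> A \<longrightarrow> x a = 0 \<and> y a = 0"
    unfolding linf_iff by blast
  then have "\<forall>a\<in>A. \<bar>x a + y a\<bar> \<le> M1 + M2" "\<forall>a. a \<notin> A \<longrightarrow> x a + y a = 0"
    by (simp_all, meson abs_triangle_ineq add_mono order_trans)
  then show "(\<lambda>a. x a + y a) \<in> linf A" unfolding linf_iff by blast
next
  fix x and c :: real assume "x \<in> linf A"
  then obtain M where "\<forall>a\<in>A. \<bar>x a\<bar> \<le> M" "\<forall>a. a \<notin> A \<longrightarrow> x a = 0" unfolding linf_iff by blast
  then have "\<forall>a\<in>A. \<bar>c * x a\<bar> \<le> \<bar>c\<bar> * M" "\<forall>a. a \<notin> A \<longrightarrow> c * x a = 0"
    by (simp_all add: abs_mult mult_left_mono)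
  then show "(\<lambda>a. c * x a) \<in> linf A" unfolding linf_iff by blast
qed

lemma absf_mem_linf: "x \<in> linf A \<Longrightarrow> absf x \<in> linf A"
  unfolding linf_iff absf_def by auto

lemma abs_le_supnorm: "x \<in> linf A \<Longrightarrow> a \<in> A \<Longrightarrow> \<bar>x a\<bar> \<le> supnorm A x"
  unfolding supnorm_def linf_iff by (intro cSUP_upper) (auto intro: bdd_aboveI2)

lemma zero_mem_fbl_sums: "0 \<in> fbl_sums A h"
  unfolding fbl_sums_def by (rule CollectI, rule exI[of _ "0::nat"], rule exI[of _ "\<lambda>k a. 0"]) simp

lemma fbl_sum_le_fbl_norm:
  assumes "bdd_above (fbl_sums A h)" "\<forall>k<(n::nat). xs k \<in> linf A" "\<forall>a\<in>A. (\<Sum>k<n. \<bar>xs k a\<bar>) \<le> 1"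
  shows "(\<Sum>k<n. \<bar>h (xs k)\<bar>) \<le> fbl_norm A h"
  unfolding fbl_norm_def using assms by (intro cSup_upper) (auto simp: fbl_sums_def)

lemma fbl_norm_le:
  assumes "\<And>n xs. \<forall>k<(n::nat). xs k \<in> linf A \<Longrightarrow> \<forall>a\<in>A. (\<Sum>k<n. \<bar>xs k a\<bar>) \<le> 1 \<Longrightarrow>
      (\<Sum>k<n. \<bar>h (xs k)\<bar>) \<le> N"
  shows "bdd_above (fbl_sums A h)" "fbl_norm A h \<le> N"
proof -
  have le: "s \<le> N" if "s \<in> fbl_sums A h" for s
    using that assms unfolding fbl_sums_def by blast
  then show "bdd_above (fbl_sums A h)" by (rule bdd_aboveI)
  show "fbl_norm A h \<le> N" unfolding fbl_norm_def using zero_mem_fbl_sums le by (intro cSup_least) auto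
qed

lemma fbl_norm_mono:
  assumes g: "bdd_above (fbl_sums A g)" and le: "\<And>x. x \<in> linf A \<Longrightarrow> \<bar>f x\<bar> \<le> \<bar>g x\<bar>"
  shows "fbl_norm A f \<le> fbl_norm A g"
  unfolding fbl_norm_def[of A f]
proof (rule cSup_least)
  show "fbl_sums A f \<noteq> {}" using zero_mem_fbl_sums by blast
  fix s assume "s \<in> fbl_sums A f"
  then obtain n :: nat and xs where s: "s = (\<Sum>k<n. \<bar>f (xs k)\<bar>)" and xs: "\<forall>k<n. xs k \<in> linf A"
    and one: "\<forall>a\<in>A. (\<Sum>k<n. \<bar>xs k a\<bar>) \<le> 1"
    unfolding fbl_sums_def by blast
  have "s \<le> (\<Sum>k<n. \<bar>g (xs k)\<bar>)" unfolding s using xs le by (intro sum_mono) auto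
  also have "\<dots> \<le> fbl_norm A g" by (rule fbl_sum_le_fbl_norm[OF g xs one])
  finally show "s \<le> fbl_norm A g" .
qed

lemma H0_pos_hom: "f \<in> H0 A \<Longrightarrow> x \<in> linf A \<Longrightarrow> t > 0 \<Longrightarrow> f (\<lambda>a. t * x a) = t * f x"
  unfolding H0_def pos_hom_def by blast

lemma H0_sum_list_le:
  assumes f: "f \<in> H0 A" and ys: "set ys \<subseteq> linf A" and s: "s > 0"
    and b: "\<forall>a\<in>A. (\<Sum>y\<leftarrow>ys. \<bar>y a\<bar>) \<le> s"
  shows "(\<Sum>y\<leftarrow>ys. f y) \<le> fbl_norm A f * s"
proof -
  define n where "n = length ys"
  define xs where "xs k = (\<lambda>a. (1 / s) * (ys ! k) a)" for k
  have ysk: "ys ! k \<in> linf A" if "k < n" for k using ys that n_def by auto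
  have xs_mem: "\<forall>k<n. xs k \<in> linf A" unfolding xs_def using ysk linf.scale_mem by blast
  have sum_list_nth: "(\<Sum>y\<leftarrow>ys. h y) = (\<Sum>k<n. h (ys ! k))" for h :: "('a \<Rightarrow> real) \<Rightarrow> real"
    unfolding n_def by (induction ys) (simp_all add: sum.lessThan_Suc_shift del: sum.lessThan_Suc)
  have "(\<Sum>k<n. \<bar>xs k a\<bar>) = (\<Sum>y\<leftarrow>ys. \<bar>y a\<bar>) / s" for a
    using s by (simp add: xs_def sum_list_nth sum_divide_distrib)
  then have "\<forall>a\<in>A. (\<Sum>k<n. \<bar>xs k a\<bar>) \<le> 1"
    using b s by (simp add: divide_le_eq)
  then have le: "(\<Sum>k<n. \<bar>f (xs k)\<bar>) \<le> fbl_norm A f"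
    using f xs_mem unfolding H0_def by (intro fbl_sum_le_fbl_norm) auto
  have "f (xs k) = (1 / s) * f (ys ! k)" if "k < n" for k
    unfolding xs_def by (rule H0_pos_hom[OF f ysk[OF that]]) (use s in simp)
  then have "f (ys ! k) = s * f (xs k)" if "k < n" for k
    using that s by simp
  then have "(\<Sum>y\<leftarrow>ys. f y) = s * (\<Sum>k<n. f (xs k))"
    by (simp add: sum_list_nth sum_distrib_left)
  also have "\<dots> \<le> s * fbl_norm A f"
    using s le by (intro mult_left_mono order_trans[OF sum_mono[of _ "\<lambda>k. f (xs k)" "\<lambda>k. \<bar>f (xs k)\<bar>"]]) auto
  finally show ?thesis by (simp add: mult.commute)
qed

text \<open>fbl_majorant A f is the functional q; a witness (t, ys) lists the y_i.\<close>

definition majorant_witnesses :: "'a set \<Rightarrow> ('a \<Rightarrow> real) \<Rightarrow> (real \<times> ('a \<Rightarrow> real) list) set" where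
  "majorant_witnesses A x = {(t, ys). set ys \<subseteq> linf A \<and> (\<forall>a\<in>A. x a + (\<Sum>y\<leftarrow>ys. \<bar>y a\<bar>) \<le> t)}"

definition fbl_majorant :: "'a set \<Rightarrow> (('a \<Rightarrow> real) \<Rightarrow> real) \<Rightarrow> ('a \<Rightarrow> real) \<Rightarrow> real" where
  "fbl_majorant A f x = (INF (t, ys)\<in>majorant_witnesses A x. fbl_norm A f * t - (\<Sum>y\<leftarrow>ys. f y))"

lemma majorant_witnesses_Nil_iff: "(t, []) \<in> majorant_witnesses A x \<longleftrightarrow> (\<forall>a\<in>A. x a \<le> t)"
  unfolding majorant_witnesses_def by simp

lemma majorant_witnesses_nonempty: "x \<in> linf A \<Longrightarrow> majorant_witnesses A x \<noteq> {}"
  unfolding linf_iff using majorant_witnesses_Nil_iff by (metis abs_le_D1 empty_iff)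

lemma majorant_witnesses_add:
  assumes "(t1, ys1) \<in> majorant_witnesses A x" "(t2, ys2) \<in> majorant_witnesses A y"
  shows "(t1 + t2, ys1 @ ys2) \<in> majorant_witnesses A (\<lambda>a. x a + y a)"
proof -
  have ys: "set ys1 \<subseteq> linf A" "set ys2 \<subseteq> linf A"
    and le1: "\<forall>a\<in>A. x a + (\<Sum>z\<leftarrow>ys1. \<bar>z a\<bar>) \<le> t1"
    and le2: "\<forall>a\<in>A. y a + (\<Sum>z\<leftarrow>ys2. \<bar>z a\<bar>) \<le> t2"
    using assms unfolding majorant_witnesses_def by auto
  have "x a + y a + (\<Sum>z\<leftarrow>ys1 @ ys2. \<bar>z a\<bar>) \<le> t1 + t2" if "a \<in> A" for a
    using le1[rule_format, OF that] le2[rule_format, OF that] by simp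
  with ys show ?thesis unfolding majorant_witnesses_def by simp
qed

lemma majorant_witnesses_scale:
  assumes "c > 0" "(t, ys) \<in> majorant_witnesses A x"
  shows "(c * t, map (\<lambda>y a. c * y a) ys) \<in> majorant_witnesses A (\<lambda>a. c * x a)"
proof -
  have "(\<Sum>y\<leftarrow>map (\<lambda>y a. c * y a) ys. \<bar>y a\<bar>) = c * (\<Sum>y\<leftarrow>ys. \<bar>y a\<bar>)" for a
    using assms(1) by (induction ys) (simp_all add: abs_mult distrib_left)
  moreover have "set ys \<subseteq> linf A" "\<forall>a\<in>A. x a + (\<Sum>y\<leftarrow>ys. \<bar>y a\<bar>) \<le> t"
    using assms(2) unfolding majorant_witnesses_def by auto
  ultimately show ?thesis
    using assms(1) unfolding majorant_witnesses_def
    by (auto simp flip: distrib_left intro!: mult_left_mono linf.scale_mem)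
qed

lemma majorant_value_lower_bound:
  assumes a0: "a0 \<in> A" and f: "f \<in> H0 A" and M: "\<forall>a\<in>A. \<bar>x a\<bar> \<le> M"
    and w: "(t, ys) \<in> majorant_witnesses A x"
  shows "- fbl_norm A f * (M + 1) \<le> fbl_norm A f * t - (\<Sum>y\<leftarrow>ys. f y)"
proof -
  have ys: "set ys \<subseteq> linf A" and le: "\<forall>a\<in>A. x a + (\<Sum>y\<leftarrow>ys. \<bar>y a\<bar>) \<le> t"
    using w unfolding majorant_witnesses_def by auto
  have sum_le: "\<forall>a\<in>A. (\<Sum>y\<leftarrow>ys. \<bar>y a\<bar>) \<le> t + M + 1"
    using le M by (fastforce dest: abs_le_D2)
  have "0 \<le> (\<Sum>y\<leftarrow>ys. \<bar>y a0\<bar>)" by (rule sum_list_nonneg) auto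
  then have "t + M + 1 > 0" using le M a0 by (fastforce dest: abs_le_D2)
  then have "(\<Sum>y\<leftarrow>ys. f y) \<le> fbl_norm A f * (t + M + 1)"
    using H0_sum_list_le[OF f ys _ sum_le] by blast
  moreover have "fbl_norm A f * (t + M + 1) = fbl_norm A f * t + fbl_norm A f * (M + 1)"
    by (simp add: algebra_simps)
  ultimately show ?thesis by linarith
qed

lemma bdd_below_majorant_values:
  assumes "A \<noteq> {}" "f \<in> H0 A" "x \<in> linf A"
  shows "bdd_below ((\<lambda>(t, ys). fbl_norm A f * t - (\<Sum>y\<leftarrow>ys. f y)) ` majorant_witnesses A x)"
proof -
  obtain a0 where a0: "a0 \<in> A" using assms(1) by blast
  obtain M where M: "\<forall>a\<in>A. \<bar>x a\<bar> \<le> M" using assms(3) unfolding linf_iff by blast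
  have "- fbl_norm A f * (M + 1) \<le> fbl_norm A f * t - (\<Sum>y\<leftarrow>ys. f y)"
    if "(t, ys) \<in> majorant_witnesses A x" for t ys
    by (rule majorant_value_lower_bound[OF a0 assms(2) M that])
  then show ?thesis by (intro bdd_belowI2[of _ "- fbl_norm A f * (M + 1)"]) auto
qed

lemma fbl_majorant_le:
  assumes "A \<noteq> {}" "f \<in> H0 A" "x \<in> linf A" "(t, ys) \<in> majorant_witnesses A x"
  shows "fbl_majorant A f x \<le> fbl_norm A f * t - (\<Sum>y\<leftarrow>ys. f y)"
  unfolding fbl_majorant_def
  using cINF_lower[OF bdd_below_majorant_values[OF assms(1-3)] assms(4)] by simp

lemma fbl_majorant_le_sup:
  "A \<noteq> {} \<Longrightarrow> f \<in> H0 A \<Longrightarrow> x \<in> linf A \<Longrightarrow> \<forall>a\<in>A. x a \<le> M \<Longrightarrow>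
    fbl_majorant A f x \<le> fbl_norm A f * M"
  using fbl_majorant_le[of A f x M "[]"] by (simp add: majorant_witnesses_Nil_iff)

lemma fbl_majorant_neg_abs:
  assumes "A \<noteq> {}" "f \<in> H0 A" "y \<in> linf A"
  shows "fbl_majorant A f (\<lambda>a. - absf y a) \<le> - f y"
proof -
  have w: "(0, [y]) \<in> majorant_witnesses A (\<lambda>a. - absf y a)"
    using assms(3) unfolding majorant_witnesses_def absf_def by simp
  show ?thesis
    using fbl_majorant_le[OF assms(1,2) linf.neg_mem[OF absf_mem_linf[OF assms(3)]] w] by simp
qed

lemma sum_list_map_scale_H0:
  "f \<in> H0 A \<Longrightarrow> set ys \<subseteq> linf A \<Longrightarrow> c > 0 \<Longrightarrow>
    (\<Sum>y\<leftarrow>map (\<lambda>y a. c * y a) ys. f y) = c * (\<Sum>y\<leftarrow>ys. f y)"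
  by (induction ys) (simp_all add: H0_pos_hom distrib_left)

lemma sublinear_on_fbl_majorant:
  assumes A: "A \<noteq> {}" and f: "f \<in> H0 A"
  shows "sublinear_on (linf A) (fbl_majorant A f)"
  unfolding sublinear_on_def
proof (intro conjI ballI allI impI)
  fix x y assume x: "x \<in> linf A" and y: "y \<in> linf A"
  have "fbl_majorant A f (\<lambda>a. x a + y a)
      \<le> (fbl_norm A f * t1 - (\<Sum>z\<leftarrow>ys1. f z)) + (fbl_norm A f * t2 - (\<Sum>z\<leftarrow>ys2. f z))"
    if "(t1, ys1) \<in> majorant_witnesses A x" "(t2, ys2) \<in> majorant_witnesses A y" for t1 ys1 t2 ys2
    using fbl_majorant_le[OF A f linf.add_mem[OF x y] majorant_witnesses_add[OF that]]
    by (simp add: algebra_simps)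
  then show "fbl_majorant A f (\<lambda>a. x a + y a) \<le> fbl_majorant A f x + fbl_majorant A f y"
    unfolding fbl_majorant_def[of A f x] fbl_majorant_def[of A f y]
    using majorant_witnesses_nonempty[OF x] majorant_witnesses_nonempty[OF y]
    by (intro le_INF_add_INF) auto
next
  have le: "fbl_majorant A f (\<lambda>a. c * x a) \<le> c * fbl_majorant A f x"
    if x: "x \<in> linf A" and c: "c > 0" for x c
    unfolding fbl_majorant_def[of A f x]
  proof (rule le_mult_INF[OF c majorant_witnesses_nonempty[OF x]], clarify)
    fix t ys assume w: "(t, ys) \<in> majorant_witnesses A x"
    then have "set ys \<subseteq> linf A" unfolding majorant_witnesses_def by simp
    then show "fbl_majorant A f (\<lambda>a. c * x a) \<le> c * (fbl_norm A f * t - (\<Sum>y\<leftarrow>ys. f y))"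
      using fbl_majorant_le[OF A f linf.scale_mem[OF x] majorant_witnesses_scale[OF c w]]
        sum_list_map_scale_H0[OF f _ c] by (simp add: algebra_simps)
  qed
  show "fbl_majorant A f (\<lambda>a. c * x a) = c * fbl_majorant A f x"
    if "x \<in> linf A" "c > 0" for x c
    by (rule linf.pos_homogeneous_if_le[where h = "fbl_majorant A f", OF le that])
qed

lemma g_of_mem_H0_pos:
  assumes \<phi>: "linear_on (linf A) \<phi>"
    and bound: "\<And>x M. x \<in> linf A \<Longrightarrow> \<forall>a\<in>A. x a \<le> M \<Longrightarrow> \<phi> x \<le> N * M"
  shows "g_of \<phi> \<in> H0_pos A" and "fbl_norm A (g_of \<phi>) \<le> N"
proof -
  have g_eq: "g_of \<phi> x = \<phi> (absf x)" if x: "x \<in> linf A" for x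
  proof -
    have "\<phi> (\<lambda>a. - absf x a) \<le> N * 0"
      by (rule bound[OF linf.neg_mem[OF absf_mem_linf[OF x]]]) (simp add: absf_def)
    then show ?thesis
      using linf.linear_on_neg[OF \<phi> absf_mem_linf[OF x]] unfolding g_of_def by simp
  qed
  have abs_g: "\<bar>g_of \<phi> x\<bar> = \<phi> (absf x)" if "x \<in> linf A" for x
    using g_eq[OF that] unfolding g_of_def by simp
  have "(\<Sum>k<n. \<bar>g_of \<phi> (xs k)\<bar>) \<le> N"
    if xs: "\<forall>k<(n::nat). xs k \<in> linf A" and one: "\<forall>a\<in>A. (\<Sum>k<n. \<bar>xs k a\<bar>) \<le> 1" for n xs
  proof -
    have "(\<Sum>k<n. \<bar>g_of \<phi> (xs k)\<bar>) = (\<Sum>k<n. \<phi> (absf (xs k)))"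
      using xs by (intro sum.cong) (simp_all add: abs_g)
    also have "\<dots> = \<phi> (\<lambda>a. \<Sum>k<n. absf (xs k) a)"
      by (rule linf.linear_on_sum[OF \<phi>, symmetric]) (use xs absf_mem_linf in blast)
    also have "\<dots> \<le> N * 1"
    proof (rule bound)
      show "(\<lambda>a. \<Sum>k<n. absf (xs k) a) \<in> linf A"
        by (rule linf.sum_mem) (use xs absf_mem_linf in blast)
      show "\<forall>a\<in>A. (\<Sum>k<n. absf (xs k) a) \<le> 1" using one by (simp add: absf_def)
    qed
    finally show ?thesis by (simp only: mult_1_right)
  qed
  note norm = fbl_norm_le[OF this]
  show "fbl_norm A (g_of \<phi>) \<le> N" by (rule norm(2))
  have "g_of \<phi> (\<lambda>a. t * x a) = t * g_of \<phi> x" if "x \<in> linf A" "t > 0" for x t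
  proof -
    have "absf (\<lambda>a. t * x a) = (\<lambda>a. t * absf x a)" using that(2) by (auto simp: absf_def abs_mult)
    then show ?thesis
      using linf.linear_on_scale[OF \<phi> absf_mem_linf[OF that(1)], of t] that(2)
      unfolding g_of_def by (simp add: abs_mult)
  qed
  then have "pos_hom A (g_of \<phi>)" unfolding pos_hom_def by blast
  moreover have "\<forall>x\<in>linf A. 0 \<le> g_of \<phi> x" unfolding g_of_def by simp
  ultimately show "g_of \<phi> \<in> H0_pos A" unfolding H0_pos_def H0_def by (simp add: norm(1))
qed

lemma linear_on_mem_linf_dual:
  assumes \<phi>: "linear_on (linf A) \<phi>"
    and bound: "\<And>x M. x \<in> linf A \<Longrightarrow> \<forall>a\<in>A. x a \<le> M \<Longrightarrow> \<phi> x \<le> N * M"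
  shows "\<phi> \<in> linf_dual A"
proof -
  have "\<bar>\<phi> x\<bar> \<le> N * supnorm A x" if x: "x \<in> linf A" for x
  proof -
    have le: "\<bar>x a\<bar> \<le> supnorm A x" if "a \<in> A" for a by (rule abs_le_supnorm[OF x that])
    have "\<phi> x \<le> N * supnorm A x"
      using le by (intro bound[OF x]) (auto dest: abs_le_D1)
    moreover have "\<phi> (\<lambda>a. - x a) \<le> N * supnorm A x"
      using le by (intro bound[OF linf.neg_mem[OF x]]) (auto dest: abs_le_D2)
    ultimately show ?thesis using linf.linear_on_neg[OF \<phi> x] by linarith
  qed
  then show ?thesis using \<phi> unfolding linf_dual_def linear_on_def by blast
qed

theorem lemma4p7:
  fixes A :: "'a set" and f :: "('a \<Rightarrow> real) \<Rightarrow> real"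
  assumes "A \<noteq> {}"
    and "f \<in> H0_pos A"
    and "maximal A f"
  shows "\<exists>\<phi>\<in>linf_dual A. \<forall>x\<in>linf A. f x = g_of \<phi> x"
proof -
  have f: "f \<in> H0 A" and f_nonneg: "\<And>x. x \<in> linf A \<Longrightarrow> 0 \<le> f x"
    using assms(2) unfolding H0_pos_def by auto
  obtain \<phi> where \<phi>: "linear_on (linf A) \<phi>"
    and \<phi>_le: "\<And>x. x \<in> linf A \<Longrightarrow> \<phi> x \<le> fbl_majorant A f x"
    using linf.linear_below_sublinear[OF sublinear_on_fbl_majorant[OF assms(1) f]] by blast
  have bound: "\<phi> x \<le> fbl_norm A f * M" if "x \<in> linf A" "\<forall>a\<in>A. x a \<le> M" for x M
    using \<phi>_le[OF that(1)] fbl_majorant_le_sup[OF assms(1) f that] by linarith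
  have f_le: "f x \<le> g_of \<phi> x" if x: "x \<in> linf A" for x
    using \<phi>_le[OF linf.neg_mem[OF absf_mem_linf[OF x]]] fbl_majorant_neg_abs[OF assms(1) f x]
      linf.linear_on_neg[OF \<phi> absf_mem_linf[OF x]]
    unfolding g_of_def by linarith
  note g = g_of_mem_H0_pos[OF \<phi> bound]
  have "fbl_norm A f \<le> fbl_norm A (g_of \<phi>)"
    using g(1) f_le f_nonneg unfolding H0_pos_def H0_def
    by (intro fbl_norm_mono) (auto intro: order_trans[OF _ abs_ge_self])
  with g(2) have "fbl_norm A (g_of \<phi>) = fbl_norm A f" by linarith
  with assms(3) g(1) f_le have eq: "\<forall>x\<in>linf A. g_of \<phi> x = f x"
    unfolding maximal_def by blast
  show ?thesis
  proof (rule bexI[OF _ linear_on_mem_linf_dual[OF \<phi> bound]])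
    show "\<forall>x\<in>linf A. f x = g_of \<phi> x" using eq by simp
  qed
qed

end
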